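(* Let $k\ge2$ and $\alpha_2,\alpha_3$ be positive integers with $\alpha_2,\alpha_3$ coprime. The Koras-Russell threefold of the first kind $X=\{x+x^ky+z^{\alpha_2}+t^{\alpha_3}=0\}\subset\mathbb{A}^4=\mathrm{Spec}(\mathbb{C}[x,y,z,t])$, endowed with the hyperbolic $\mathbb{G}_m$-action induced by $\lambda\cdot(x,y,z,t)=(\lambda^{\alpha_2\alpha_3}x,\lambda^{-(k-1)\alpha_2\alpha_3}y,\lambda^{\alpha_3}z,\lambda^{\alpha_2}t)$, is $\mathbb{G}_m$-linearly uniformly rational.
   Context: A $\mathbb{G}_m$-variety $X$ is $\mathbb{G}_m$-linearly rational at $x\in X$ if there exist a $\mathbb{G}_m$-stable open neighborhood $U_x$ of $x$, a linear $\mathbb{G}_m$-representation $V\simeq\mathbb{A}^n$ and a $\mathbb{G}_m$-stable open subset $U'\subset V$ with $U_x$ equivariantly isomorphic to $U'$; $X$ is $\mathbb{G}_m$-linearly uniformly rational if this holds at every point of $X$. *)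

theory Defs
  imports Complex_Main "HOL-Computational_Algebra.Polynomial"
begin

text \<open>Affine n-space over the complex numbers: its (closed) points are the complex lists of length n.\<close>

definition affine_space :: "nat \<Rightarrow> complex list set" where
  "affine_space n = {v. length v = n}"

inductive_set polyfun :: "nat \<Rightarrow> (complex list \<Rightarrow> complex) set" for n :: nat where
  pf_const: "(\<lambda>v. c) \<in> polyfun n"
| pf_coord: "i < n \<Longrightarrow> (\<lambda>v. v ! i) \<in> polyfun n"
| pf_add: "f \<in> polyfun n \<Longrightarrow> g \<in> polyfun n \<Longrightarrow> (\<lambda>v. f v + g v) \<in> polyfun n"
| pf_mult: "f \<in> polyfun n \<Longrightarrow> g \<in> polyfun n \<Longrightarrow> (\<lambda>v. f v * g v) \<in> polyfun n"

definition zariski_closed :: "nat \<Rightarrow> complex list set \<Rightarrow> bool" where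
  "zariski_closed n C \<longleftrightarrow>
     (\<exists>F. F \<subseteq> polyfun n \<and> C = {v \<in> affine_space n. \<forall>f\<in>F. f v = 0})"

definition zariski_open_in :: "nat \<Rightarrow> complex list set \<Rightarrow> complex list set \<Rightarrow> bool" where
  "zariski_open_in n Y U \<longleftrightarrow> U \<subseteq> Y \<and> (\<exists>C. zariski_closed n C \<and> U = Y - C)"

definition regular_fun :: "nat \<Rightarrow> complex list set \<Rightarrow> (complex list \<Rightarrow> complex) \<Rightarrow> bool" where
  "regular_fun n W g \<longleftrightarrow>
     (\<forall>p\<in>W. \<exists>U. zariski_open_in n W U \<and> p \<in> U \<and>
        (\<exists>f h. f \<in> polyfun n \<and> h \<in> polyfun n \<and>
           (\<forall>q\<in>U. h q \<noteq> 0 \<and> g q = f q / h q)))"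

definition regular_map ::
  "nat \<Rightarrow> complex list set \<Rightarrow> nat \<Rightarrow> (complex list \<Rightarrow> complex list) \<Rightarrow> bool" where
  "regular_map n W m \<phi> \<longleftrightarrow>
     (\<forall>p\<in>W. length (\<phi> p) = m) \<and> (\<forall>i<m. regular_fun n W (\<lambda>q. \<phi> q ! i))"

definition variety_iso ::
  "nat \<Rightarrow> complex list set \<Rightarrow> nat \<Rightarrow> complex list set \<Rightarrow> (complex list \<Rightarrow> complex list) \<Rightarrow> bool" where
  "variety_iso n W m W' \<phi> \<longleftrightarrow>
     regular_map n W m \<phi> \<and> (\<forall>p\<in>W. \<phi> p \<in> W') \<and>
     (\<exists>\<psi>. regular_map m W' n \<psi> \<and> (\<forall>q\<in>W'. \<psi> q \<in> W) \<and>
          (\<forall>p\<in>W. \<psi> (\<phi> p) = p) \<and> (\<forall>q\<in>W'. \<phi> (\<psi> q) = q))"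

definition gm_stable :: "(complex \<Rightarrow> complex list \<Rightarrow> complex list) \<Rightarrow> complex list set \<Rightarrow> bool" where
  "gm_stable act U \<longleftrightarrow> (\<forall>l. l \<noteq> 0 \<longrightarrow> (\<forall>p\<in>U. act l p \<in> U))"

definition gm_equivariant ::
  "(complex \<Rightarrow> complex list \<Rightarrow> complex list) \<Rightarrow> (complex \<Rightarrow> complex list \<Rightarrow> complex list)
     \<Rightarrow> complex list set \<Rightarrow> (complex list \<Rightarrow> complex list) \<Rightarrow> bool" where
  "gm_equivariant act act' U \<phi> \<longleftrightarrow> (\<forall>l. l \<noteq> 0 \<longrightarrow> (\<forall>p\<in>U. \<phi> (act l p) = act' l (\<phi> p)))"

text \<open>A linear (algebraic) representation of G_m on C^n: a homomorphism l \<mapsto> rho l from C^*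
  to n x n matrices whose entries are regular functions on G_m (Laurent polynomials).\<close>

definition gm_linear_rep :: "nat \<Rightarrow> (complex \<Rightarrow> nat \<Rightarrow> nat \<Rightarrow> complex) \<Rightarrow> bool" where
  "gm_linear_rep n \<rho> \<longleftrightarrow>
     (\<forall>i<n. \<forall>j<n. \<exists>(p::complex poly) (N::nat). \<forall>l. l \<noteq> 0 \<longrightarrow> \<rho> l i j = poly p l / l ^ N) \<and>
     (\<forall>i<n. \<forall>j<n. \<rho> 1 i j = (if i = j then 1 else 0)) \<and>
     (\<forall>l m. l \<noteq> 0 \<longrightarrow> m \<noteq> 0 \<longrightarrow>
        (\<forall>i<n. \<forall>j<n. \<rho> (l * m) i j = (\<Sum>r<n. \<rho> l i r * \<rho> m r j)))"

definition rep_act :: "nat \<Rightarrow> (complex \<Rightarrow> nat \<Rightarrow> nat \<Rightarrow> complex) \<Rightarrow> complex \<Rightarrow> complex list \<Rightarrow> complex list" where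
  "rep_act n \<rho> l v = map (\<lambda>i. \<Sum>j<n. \<rho> l i j * v ! j) [0..<n]"

definition gm_linearly_rational_at ::
  "nat \<Rightarrow> complex list set \<Rightarrow> (complex \<Rightarrow> complex list \<Rightarrow> complex list) \<Rightarrow> complex list \<Rightarrow> bool" where
  "gm_linearly_rational_at n X act x \<longleftrightarrow>
     (\<exists>U. zariski_open_in n X U \<and> x \<in> U \<and> gm_stable act U \<and>
        (\<exists>m \<rho> U' \<phi>. gm_linear_rep m \<rho> \<and> zariski_open_in m (affine_space m) U' \<and>
            gm_stable (rep_act m \<rho>) U' \<and> variety_iso n U m U' \<phi> \<and>
            gm_equivariant act (rep_act m \<rho>) U \<phi>))"

definition gm_linearly_uniformly_rational ::
  "nat \<Rightarrow> complex list set \<Rightarrow> (complex \<Rightarrow> complex list \<Rightarrow> complex list) \<Rightarrow> bool" where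
  "gm_linearly_uniformly_rational n X act \<longleftrightarrow> (\<forall>x\<in>X. gm_linearly_rational_at n X act x)"

text \<open>The Koras-Russell threefold of the first kind and its hyperbolic G_m-action;
  coordinates (x,y,z,t) = (v!0, v!1, v!2, v!3).\<close>

definition KR_threefold :: "nat \<Rightarrow> nat \<Rightarrow> nat \<Rightarrow> complex list set" where
  "KR_threefold k a2 a3 = {v \<in> affine_space 4.
     v ! 0 + v ! 0 ^ k * v ! 1 + v ! 2 ^ a2 + v ! 3 ^ a3 = 0}"

definition KR_action :: "nat \<Rightarrow> nat \<Rightarrow> nat \<Rightarrow> complex \<Rightarrow> complex list \<Rightarrow> complex list" where
  "KR_action k a2 a3 l v =
     [l ^ (a2 * a3) * v ! 0,
      l powi (- (int (k - 1) * int a2 * int a3)) * v ! 1,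
      l ^ a3 * v ! 2,
      l ^ a2 * v ! 3]"

end

theory Submission
  imports Defs
begin

text \<open>
  Put u = 1 + x^(k-1) y, so that X is given by x u = -(z^\<alpha>2 + t^\<alpha>3). The function x is
  semi-invariant and u is invariant, and as k \<ge> 2 the stable open sets {x \<noteq> 0} and {u \<noteq> 0}
  cover X. On {x \<noteq> 0} the equation determines y, so (x, z, t) is an equivariant chart onto
  {x \<noteq> 0} in A^3 with weights (\<alpha>2 \<alpha>3, \<alpha>3, \<alpha>2). On {u \<noteq> 0} the coordinates
  (s, z, t) = (y / u^(k-1), z, t) suffice: u = 1 + s (-(z^\<alpha>2 + t^\<alpha>3))^(k-1) is recovered from them,
  then x = -(z^\<alpha>2 + t^\<alpha>3) / u and y = s u^(k-1); the weights are (-(k-1) \<alpha>2 \<alpha>3, \<alpha>3, \<alpha>2).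
\<close>

lemma polyfun_power: "f \<in> polyfun n \<Longrightarrow> (\<lambda>v. f v ^ j) \<in> polyfun n"
  by (induction j) (auto intro: polyfun.intros)

lemma polyfun_uminus: "f \<in> polyfun n \<Longrightarrow> (\<lambda>v. - f v) \<in> polyfun n"
  using polyfun.pf_mult[OF polyfun.pf_const[of "-1"], of f] by simp

lemma polyfun_diff: "f \<in> polyfun n \<Longrightarrow> g \<in> polyfun n \<Longrightarrow> (\<lambda>v. f v - g v) \<in> polyfun n"
  using polyfun.pf_add[of f n "\<lambda>v. - g v"] polyfun_uminus[of g] by simp

lemmas polyfun_intros = polyfun.intros polyfun_power polyfun_uminus polyfun_diff

lemma zariski_open_in_nonzero:
  assumes "f \<in> polyfun n" "Y \<subseteq> affine_space n"
  shows "zariski_open_in n Y {v \<in> Y. f v \<noteq> 0}"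
proof -
  have "zariski_closed n {v \<in> affine_space n. f v = 0}"
    unfolding zariski_closed_def using assms(1) by (intro exI[of _ "{f}"]) auto
  then show ?thesis
    unfolding zariski_open_in_def using assms(2) by blast
qed

lemma regular_fun_divide:
  assumes "f \<in> polyfun n" "h \<in> polyfun n" "W \<subseteq> affine_space n" "\<And>q. q \<in> W \<Longrightarrow> h q \<noteq> 0"
  shows "regular_fun n W (\<lambda>q. f q / h q)"
proof -
  have "zariski_open_in n W W"
    using zariski_open_in_nonzero[OF polyfun.pf_const[of 1] assms(3)] by simp
  then show ?thesis
    unfolding regular_fun_def using assms by blast
qed

lemma regular_fun_polyfun:
  assumes "f \<in> polyfun n" "W \<subseteq> affine_space n"
  shows "regular_fun n W f"
  using regular_fun_divide[OF assms(1) polyfun.pf_const[of 1] assms(2)] by simp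

definition diag_rep :: "int list \<Rightarrow> complex \<Rightarrow> nat \<Rightarrow> nat \<Rightarrow> complex" where
  "diag_rep ws l i j = (if i = j then l powi (ws ! i) else 0)"

lemma power_int_laurent:
  "\<exists>(p::complex poly) (N::nat). \<forall>l. l \<noteq> 0 \<longrightarrow> l powi d = poly p l / l ^ N"
proof (cases "d \<ge> 0")
  case True
  then show ?thesis
    by (intro exI[of _ "monom 1 (nat d)"] exI[of _ 0]) (auto simp: poly_monom power_int_def)
next
  case False
  then show ?thesis
    by (intro exI[of _ 1] exI[of _ "nat (- d)"]) (auto simp: power_int_def field_simps)
qed

lemma sum_diag_rep:
  assumes "i < n"
  shows "(\<Sum>j<n. diag_rep ws l i j * g j) = l powi (ws ! i) * g i"
proof -
  have "(\<Sum>j<n. diag_rep ws l i j * g j) = (\<Sum>j<n. if j = i then l powi (ws ! i) * g i else 0)"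
    by (rule sum.cong) (auto simp: diag_rep_def)
  then show ?thesis
    using assms by simp
qed

lemma gm_linear_rep_diag_rep: "gm_linear_rep n (diag_rep ws)"
  unfolding gm_linear_rep_def
proof (intro conjI allI impI)
  fix i j
  show "\<exists>(p::complex poly) (N::nat). \<forall>l. l \<noteq> 0 \<longrightarrow> diag_rep ws l i j = poly p l / l ^ N"
  proof (cases "i = j")
    case True
    then show ?thesis
      using power_int_laurent[of "ws ! i"] by (simp add: diag_rep_def)
  next
    case False
    then show ?thesis
      by (intro exI[of _ 0] exI[of _ 0]) (simp add: diag_rep_def)
  qed
  show "diag_rep ws 1 i j = (if i = j then 1 else 0)"
    by (simp add: diag_rep_def)
next
  fix l m :: complex and i j
  assume "i < n"
  then show "diag_rep ws (l * m) i j = (\<Sum>r<n. diag_rep ws l i r * diag_rep ws m r j)"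
    by (simp add: sum_diag_rep) (simp add: diag_rep_def power_int_mult_distrib)
qed

lemma rep_act_diag_rep: "rep_act n (diag_rep ws) l v = map (\<lambda>i. l powi (ws ! i) * v ! i) [0..<n]"
  unfolding rep_act_def by (simp add: sum_diag_rep)

lemma rep_act_diag_rep_3:
  "rep_act 3 (diag_rep [e0, e1, e2]) l v = [l powi e0 * v ! 0, l powi e1 * v ! 1, l powi e2 * v ! 2]"
proof -
  have "[0..<3] = [0, 1, 2::nat]"
    by (simp add: upt_rec)
  then show ?thesis
    by (simp add: rep_act_diag_rep)
qed

lemma gm_stable_iso_image:
  assumes "gm_stable act U" "variety_iso n U m U' \<phi>" "gm_equivariant act act' U \<phi>"
  shows "gm_stable act' U'"
  unfolding gm_stable_def
proof (intro allI impI ballI)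
  fix l :: complex and w :: "complex list"
  assume "l \<noteq> 0" "w \<in> U'"
  from assms(2) obtain \<psi> where "\<psi> w \<in> U" "\<phi> (\<psi> w) = w" and \<phi>U: "\<forall>p\<in>U. \<phi> p \<in> U'"
    using \<open>w \<in> U'\<close> unfolding variety_iso_def by blast
  then have "act' l w = \<phi> (act l (\<psi> w))"
    using assms(3) \<open>l \<noteq> 0\<close> unfolding gm_equivariant_def by metis
  then show "act' l w \<in> U'"
    using \<phi>U assms(1) \<open>l \<noteq> 0\<close> \<open>\<psi> w \<in> U\<close> unfolding gm_stable_def by auto
qed

lemma gm_linearly_rational_at_diag_chart:
  assumes "X \<subseteq> affine_space n" "gm_stable act X"
    and "f \<in> polyfun n" "\<And>l v. l \<noteq> 0 \<Longrightarrow> v \<in> X \<Longrightarrow> f (act l v) = l ^ d * f v"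
    and "g \<in> polyfun m"
    and "x \<in> X" "f x \<noteq> 0"
    and iso: "variety_iso n {v \<in> X. f v \<noteq> 0} m {w \<in> affine_space m. g w \<noteq> 0} \<phi>"
    and equiv: "gm_equivariant act (rep_act m (diag_rep ws)) {v \<in> X. f v \<noteq> 0} \<phi>"
  shows "gm_linearly_rational_at n X act x"
proof -
  have "gm_stable act {v \<in> X. f v \<noteq> 0}"
    using assms(2,4) unfolding gm_stable_def by simp
  moreover have "zariski_open_in n X {v \<in> X. f v \<noteq> 0}"
    using zariski_open_in_nonzero assms(1,3) by blast
  moreover have "zariski_open_in m (affine_space m) {w \<in> affine_space m. g w \<noteq> 0}"
    using zariski_open_in_nonzero assms(5) by blast
  ultimately show ?thesis
    unfolding gm_linearly_rational_at_def
    using assms(6,7) gm_linear_rep_diag_rep gm_stable_iso_image[OF _ iso equiv] iso equiv by blast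
qed

lemma all_less_3: "(\<forall>i<3. P i) \<longleftrightarrow> P 0 \<and> P 1 \<and> P (2::nat)"
  by (auto simp: less_Suc_eq numeral_eq_Suc)

lemma all_less_4: "(\<forall>i<4. P i) \<longleftrightarrow> P 0 \<and> P 1 \<and> P 2 \<and> P (3::nat)"
  by (auto simp: less_Suc_eq numeral_eq_Suc)

lemma power_mult_power_int_neg:
  fixes l :: "'a :: division_ring"
  assumes "l \<noteq> 0"
  shows "l ^ n * l powi (- int n) = 1"
  using assms by (simp add: power_int_minus power_int_of_nat)

lemma KR_threefold_subset: "KR_threefold k a2 a3 \<subseteq> affine_space 4"
  unfolding KR_threefold_def by auto

definition KR_unit :: "nat \<Rightarrow> complex list \<Rightarrow> complex" where
  "KR_unit k v = 1 + v ! 0 ^ (k - 1) * v ! 1"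

lemma KR_threefold_iff_unit:
  assumes "k \<ge> 1"
  shows "v \<in> KR_threefold k a2 a3 \<longleftrightarrow>
    length v = 4 \<and> v ! 0 * KR_unit k v = - (v ! 2 ^ a2 + v ! 3 ^ a3)"
proof -
  have "v ! 0 ^ k = v ! 0 * v ! 0 ^ (k - 1)"
    using assms by (simp flip: power_Suc)
  then show ?thesis
    unfolding KR_threefold_def affine_space_def KR_unit_def
    by (auto simp: algebra_simps eq_neg_iff_add_eq_0)
qed

lemma KR_unit_action:
  assumes "l \<noteq> 0"
  shows "KR_unit k (KR_action k a2 a3 l v) = KR_unit k v"
proof -
  have "(l ^ (a2 * a3)) ^ (k - 1) * l powi (- (int (k - 1) * int a2 * int a3)) = 1"
    using power_mult_power_int_neg[OF assms, of "(k - 1) * a2 * a3"]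
    by (simp add: ac_simps flip: power_mult)
  then show ?thesis
    unfolding KR_unit_def KR_action_def
    by (simp add: power_mult_distrib)
qed

lemma gm_stable_KR_threefold:
  assumes "k \<ge> 1"
  shows "gm_stable (KR_action k a2 a3) (KR_threefold k a2 a3)"
  unfolding gm_stable_def
proof (intro allI impI ballI)
  fix l :: complex and v
  assume "l \<noteq> 0" "v \<in> KR_threefold k a2 a3"
  then have "v ! 0 * KR_unit k v = - (v ! 2 ^ a2 + v ! 3 ^ a3)"
    using KR_threefold_iff_unit[OF assms] by blast
  then have "l ^ (a2 * a3) * v ! 0 * KR_unit k v = l ^ (a2 * a3) * - (v ! 2 ^ a2 + v ! 3 ^ a3)"
    by (simp add: mult.assoc)
  also have "\<dots> = - ((l ^ a3 * v ! 2) ^ a2 + (l ^ a2 * v ! 3) ^ a3)"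
    by (simp add: power_mult_distrib algebra_simps flip: power_mult)
  finally show "KR_action k a2 a3 l v \<in> KR_threefold k a2 a3"
    using KR_threefold_iff_unit[OF assms] KR_unit_action[OF \<open>l \<noteq> 0\<close>]
    by (simp add: KR_action_def)
qed

definition KR_x_chart :: "complex list \<Rightarrow> complex list" where
  "KR_x_chart v = [v ! 0, v ! 2, v ! 3]"

definition KR_x_chart_inv :: "nat \<Rightarrow> nat \<Rightarrow> nat \<Rightarrow> complex list \<Rightarrow> complex list" where
  "KR_x_chart_inv k a2 a3 w = [w ! 0, - (w ! 0 + w ! 1 ^ a2 + w ! 2 ^ a3) / w ! 0 ^ k, w ! 1, w ! 2]"

lemma KR_x_chart_iso:
  "variety_iso 4 {v \<in> KR_threefold k a2 a3. v ! 0 \<noteq> 0}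
    3 {w \<in> affine_space 3. w ! 0 \<noteq> 0} KR_x_chart"
proof -
  define U where "U = {v \<in> KR_threefold k a2 a3. v ! 0 \<noteq> 0}"
  define U' where "U' = {w \<in> affine_space 3. w ! 0 \<noteq> 0}"
  have U: "U \<subseteq> affine_space 4" and U': "U' \<subseteq> affine_space 3"
    using KR_threefold_subset by (auto simp: U_def U'_def)
  have "regular_map 4 U 3 KR_x_chart"
    unfolding regular_map_def KR_x_chart_def all_less_3
    by (auto intro!: regular_fun_polyfun[OF _ U] polyfun_intros)
  moreover have "regular_fun 3 U' (\<lambda>w. - (w ! 0 + w ! 1 ^ a2 + w ! 2 ^ a3) / w ! 0 ^ k)"
    by (rule regular_fun_divide[OF _ _ U']) (auto simp: U'_def intro!: polyfun_intros)
  then have "regular_map 3 U' 4 (KR_x_chart_inv k a2 a3)"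
    unfolding regular_map_def KR_x_chart_inv_def all_less_4
    by (auto intro!: regular_fun_polyfun[OF _ U'] polyfun_intros)
  moreover have "KR_x_chart v \<in> U'" "KR_x_chart_inv k a2 a3 (KR_x_chart v) = v" if "v \<in> U" for v
  proof -
    have "length v = 4" "v ! 0 \<noteq> 0" "v ! 0 + v ! 0 ^ k * v ! 1 + v ! 2 ^ a2 + v ! 3 ^ a3 = 0"
      using that by (auto simp: U_def KR_threefold_def affine_space_def)
    moreover from this have "v ! 1 * v ! 0 ^ k = - (v ! 0 + v ! 2 ^ a2 + v ! 3 ^ a3)"
      by (simp only: eq_neg_iff_add_eq_0) (simp add: algebra_simps)
    then have "- (v ! 0 + v ! 2 ^ a2 + v ! 3 ^ a3) / v ! 0 ^ k = v ! 1"
      using \<open>v ! 0 \<noteq> 0\<close> by (simp add: divide_eq_eq)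
    ultimately show "KR_x_chart v \<in> U'" "KR_x_chart_inv k a2 a3 (KR_x_chart v) = v"
      by (auto simp: U'_def KR_x_chart_def KR_x_chart_inv_def affine_space_def
          list_eq_iff_nth_eq less_Suc_eq numeral_eq_Suc)
  qed
  moreover have "KR_x_chart_inv k a2 a3 w \<in> U" "KR_x_chart (KR_x_chart_inv k a2 a3 w) = w"
    if "w \<in> U'" for w
  proof -
    have "length w = 3" "w ! 0 \<noteq> 0"
      using that by (auto simp: U'_def affine_space_def)
    then show "KR_x_chart_inv k a2 a3 w \<in> U" "KR_x_chart (KR_x_chart_inv k a2 a3 w) = w"
      by (auto simp: U_def KR_threefold_def affine_space_def KR_x_chart_def KR_x_chart_inv_def
          list_eq_iff_nth_eq less_Suc_eq numeral_eq_Suc)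
  qed
  ultimately show ?thesis
    unfolding variety_iso_def U_def U'_def by blast
qed

lemma KR_x_chart_equivariant:
  "gm_equivariant (KR_action k a2 a3) (rep_act 3 (diag_rep [int (a2 * a3), int a3, int a2])) U KR_x_chart"
  unfolding gm_equivariant_def
  by (simp add: rep_act_diag_rep_3 KR_x_chart_def KR_action_def power_int_of_nat flip: of_nat_mult)

lemma KR_linearly_rational_at_x_nonzero:
  assumes "k \<ge> 1" "x \<in> KR_threefold k a2 a3" "x ! 0 \<noteq> 0"
  shows "gm_linearly_rational_at 4 (KR_threefold k a2 a3) (KR_action k a2 a3) x"
  by (rule gm_linearly_rational_at_diag_chart[where f = "\<lambda>v. v ! 0" and d = "a2 * a3",
        OF KR_threefold_subset gm_stable_KR_threefold[OF assms(1)] _ _ _ assms(2,3)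
        KR_x_chart_iso KR_x_chart_equivariant])
     (auto simp: KR_action_def intro: polyfun_intros)

definition KR_u_chart_unit :: "nat \<Rightarrow> nat \<Rightarrow> nat \<Rightarrow> complex list \<Rightarrow> complex" where
  "KR_u_chart_unit k a2 a3 w = 1 + w ! 0 * (- (w ! 1 ^ a2 + w ! 2 ^ a3)) ^ (k - 1)"

definition KR_u_chart :: "nat \<Rightarrow> complex list \<Rightarrow> complex list" where
  "KR_u_chart k v = [v ! 1 / KR_unit k v ^ (k - 1), v ! 2, v ! 3]"

definition KR_u_chart_inv :: "nat \<Rightarrow> nat \<Rightarrow> nat \<Rightarrow> complex list \<Rightarrow> complex list" where
  "KR_u_chart_inv k a2 a3 w =
     [- (w ! 1 ^ a2 + w ! 2 ^ a3) / KR_u_chart_unit k a2 a3 w,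
      w ! 0 * KR_u_chart_unit k a2 a3 w ^ (k - 1), w ! 1, w ! 2]"

lemma polyfun_KR_unit: "KR_unit k \<in> polyfun 4"
  unfolding KR_unit_def by (auto intro!: polyfun_intros)

lemma polyfun_KR_u_chart_unit: "KR_u_chart_unit k a2 a3 \<in> polyfun 3"
  unfolding KR_u_chart_unit_def by (auto intro!: polyfun_intros)

lemma KR_u_chart_unit_KR_u_chart:
  assumes "k \<ge> 1" "v \<in> KR_threefold k a2 a3" "KR_unit k v \<noteq> 0"
  shows "KR_u_chart_unit k a2 a3 (KR_u_chart k v) = KR_unit k v"
proof -
  have "- (v ! 2 ^ a2 + v ! 3 ^ a3) = v ! 0 * KR_unit k v"
    using KR_threefold_iff_unit[OF assms(1)] assms(2) by simp
  then have "KR_u_chart_unit k a2 a3 (KR_u_chart k v)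
      = 1 + v ! 1 / KR_unit k v ^ (k - 1) * (v ! 0 * KR_unit k v) ^ (k - 1)"
    by (simp add: KR_u_chart_unit_def KR_u_chart_def)
  also have "\<dots> = 1 + v ! 0 ^ (k - 1) * v ! 1"
    using assms(3) by (simp add: power_mult_distrib)
  finally show ?thesis
    by (simp add: KR_unit_def)
qed

lemma KR_unit_KR_u_chart_inv:
  assumes "KR_u_chart_unit k a2 a3 w \<noteq> 0"
  shows "KR_unit k (KR_u_chart_inv k a2 a3 w) = KR_u_chart_unit k a2 a3 w"
  using assms by (simp add: KR_unit_def KR_u_chart_inv_def KR_u_chart_unit_def power_divide mult.commute)

lemma KR_u_chart_iso:
  assumes "k \<ge> 1"
  shows "variety_iso 4 {v \<in> KR_threefold k a2 a3. KR_unit k v \<noteq> 0}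
    3 {w \<in> affine_space 3. KR_u_chart_unit k a2 a3 w \<noteq> 0} (KR_u_chart k)"
proof -
  define U where "U = {v \<in> KR_threefold k a2 a3. KR_unit k v \<noteq> 0}"
  define U' where "U' = {w \<in> affine_space 3. KR_u_chart_unit k a2 a3 w \<noteq> 0}"
  have U: "U \<subseteq> affine_space 4" and U': "U' \<subseteq> affine_space 3"
    using KR_threefold_subset by (auto simp: U_def U'_def)
  have "regular_fun 4 U (\<lambda>v. v ! 1 / KR_unit k v ^ (k - 1))"
    by (rule regular_fun_divide[OF _ _ U]) (auto simp: U_def intro!: polyfun_intros polyfun_KR_unit)
  then have "regular_map 4 U 3 (KR_u_chart k)"
    unfolding regular_map_def KR_u_chart_def all_less_3
    by (auto intro!: regular_fun_polyfun[OF _ U] polyfun_intros)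
  moreover have "regular_fun 3 U' (\<lambda>w. - (w ! 1 ^ a2 + w ! 2 ^ a3) / KR_u_chart_unit k a2 a3 w)"
    by (rule regular_fun_divide[OF _ polyfun_KR_u_chart_unit U']) (auto simp: U'_def intro!: polyfun_intros)
  then have "regular_map 3 U' 4 (KR_u_chart_inv k a2 a3)"
    unfolding regular_map_def KR_u_chart_inv_def all_less_4
    by (auto intro!: regular_fun_polyfun[OF _ U'] polyfun_intros polyfun_KR_u_chart_unit)
  moreover have "KR_u_chart k v \<in> U'" "KR_u_chart_inv k a2 a3 (KR_u_chart k v) = v" if "v \<in> U" for v
  proof -
    have "length v = 4" "KR_unit k v \<noteq> 0" "- (v ! 2 ^ a2 + v ! 3 ^ a3) = v ! 0 * KR_unit k v"
      using that KR_threefold_iff_unit[OF assms] by (auto simp: U_def)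
    then show "KR_u_chart k v \<in> U'" "KR_u_chart_inv k a2 a3 (KR_u_chart k v) = v"
      using KR_u_chart_unit_KR_u_chart[OF assms] that
      by (auto simp: U_def U'_def KR_u_chart_def KR_u_chart_inv_def affine_space_def
          list_eq_iff_nth_eq less_Suc_eq numeral_eq_Suc)
  qed
  moreover have "KR_u_chart_inv k a2 a3 w \<in> U" "KR_u_chart k (KR_u_chart_inv k a2 a3 w) = w" if "w \<in> U'" for w
  proof -
    have "length w = 3" "KR_u_chart_unit k a2 a3 w \<noteq> 0"
      using that by (auto simp: U'_def affine_space_def)
    then show "KR_u_chart_inv k a2 a3 w \<in> U" "KR_u_chart k (KR_u_chart_inv k a2 a3 w) = w"
      using KR_unit_KR_u_chart_inv KR_threefold_iff_unit[OF assms]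
      by (auto simp: U_def KR_u_chart_def KR_u_chart_inv_def list_eq_iff_nth_eq less_Suc_eq numeral_eq_Suc)
  qed
  ultimately show ?thesis
    unfolding variety_iso_def U_def U'_def by blast
qed

lemma KR_u_chart_equivariant:
  "gm_equivariant (KR_action k a2 a3)
    (rep_act 3 (diag_rep [- (int (k - 1) * int a2 * int a3), int a3, int a2])) U (KR_u_chart k)"
  unfolding gm_equivariant_def
  by (simp add: rep_act_diag_rep_3 KR_u_chart_def KR_unit_action power_int_of_nat)
     (simp add: KR_action_def)

lemma KR_linearly_rational_at_unit_nonzero:
  assumes "k \<ge> 1" "x \<in> KR_threefold k a2 a3" "KR_unit k x \<noteq> 0"
  shows "gm_linearly_rational_at 4 (KR_threefold k a2 a3) (KR_action k a2 a3) x"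
  by (rule gm_linearly_rational_at_diag_chart[where d = 0,
        OF KR_threefold_subset gm_stable_KR_threefold[OF assms(1)] polyfun_KR_unit _
        polyfun_KR_u_chart_unit assms(2,3) KR_u_chart_iso[OF assms(1)] KR_u_chart_equivariant])
     (simp add: KR_unit_action)

theorem theorem3p6:
  fixes k a2 a3 :: nat
  assumes "k \<ge> 2" and "a2 > 0" and "a3 > 0" and "coprime a2 a3"
  shows "gm_linearly_uniformly_rational 4 (KR_threefold k a2 a3) (KR_action k a2 a3)"
  unfolding gm_linearly_uniformly_rational_def
proof
  fix x assume x: "x \<in> KR_threefold k a2 a3"
  have k: "k \<ge> 1"
    using assms(1) by simp
  show "gm_linearly_rational_at 4 (KR_threefold k a2 a3) (KR_action k a2 a3) x"
  proof (cases "x ! 0 = 0")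
    case True
    then have "KR_unit k x = 1"
      using assms(1) by (simp add: KR_unit_def)
    then show ?thesis
      using KR_linearly_rational_at_unit_nonzero[OF k x] by simp
  next
    case False
    then show ?thesis
      using KR_linearly_rational_at_x_nonzero[OF k x] by simp
  qed
qed

end
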